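(* Let $h:B_4\to B_3$ be the homomorphism with $h(\sigma_1)=\sigma_1$, $h(\sigma_2)=\sigma_2$, $h(\sigma_3)=\sigma_1$. Then $\ker h$ is densely ordered by the restriction of the Dehornoy ordering of $B_4$.
   Context: $B_n$ is the Artin braid group with generators $\sigma_1,\dots,\sigma_{n-1}$. A word in the generators is $i$-positive if it contains only $\sigma_1,\dots,\sigma_i$ and their inverses, $\sigma_i$ occurs, and every occurrence of $\sigma_i$ has positive exponent; a braid is $i$-positive if some representative word is. The Dehornoy ordering is the left-invariant total order on $B_n$ whose positive cone consists of all braids that are $i$-positive for some $i$. A subgroup is densely ordered if it has no least positive element (equivalently, between any two of its elements lies a third). *)

theory Defs
  imports Main
begin

text \<open>Braid words: a letter (i, True) is sigma_i, (i, False) is sigma_i inverse.\<close>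
type_synonym letter = "nat \<times> bool"
type_synonym word = "letter list"

definition gens :: "nat \<Rightarrow> word \<Rightarrow> bool" where
  "gens n w \<longleftrightarrow> (\<forall>(i, b) \<in> set w. 1 \<le> i \<and> i < n)"

definition inv_word :: "word \<Rightarrow> word" where
  "inv_word w = rev (map (\<lambda>(i, b). (i, \<not> b)) w)"

inductive braid_rel :: "nat \<Rightarrow> word \<Rightarrow> word \<Rightarrow> bool" for n :: nat where
  cancel: "1 \<le> i \<Longrightarrow> i < n \<Longrightarrow> braid_rel n [(i, b), (i, \<not> b)] []"
| comm: "1 \<le> i \<Longrightarrow> i < n \<Longrightarrow> 1 \<le> j \<Longrightarrow> j < n \<Longrightarrow> i + 2 \<le> j \<or> j + 2 \<le> i \<Longrightarrow>
    braid_rel n [(i, True), (j, True)] [(j, True), (i, True)]"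
| braid: "1 \<le> i \<Longrightarrow> i < n \<Longrightarrow> 1 \<le> j \<Longrightarrow> j < n \<Longrightarrow> j = i + 1 \<or> i = j + 1 \<Longrightarrow>
    braid_rel n [(i, True), (j, True), (i, True)] [(j, True), (i, True), (j, True)]"

inductive braid_eq :: "nat \<Rightarrow> word \<Rightarrow> word \<Rightarrow> bool" for n :: nat where
  refl: "gens n w \<Longrightarrow> braid_eq n w w"
| sym: "braid_eq n u v \<Longrightarrow> braid_eq n v u"
| trans: "braid_eq n u v \<Longrightarrow> braid_eq n v w \<Longrightarrow> braid_eq n u w"
| ctx: "braid_rel n v v' \<Longrightarrow> gens n u \<Longrightarrow> gens n x \<Longrightarrow> braid_eq n (u @ v @ x) (u @ v' @ x)"

definition i_positive :: "nat \<Rightarrow> word \<Rightarrow> bool" where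
  "i_positive i w \<longleftrightarrow> (\<forall>(j, b) \<in> set w. 1 \<le> j \<and> j \<le> i) \<and> (i, True) \<in> set w \<and> (i, False) \<notin> set w"

definition dehornoy_pos :: "nat \<Rightarrow> word \<Rightarrow> bool" where
  "dehornoy_pos n w \<longleftrightarrow> gens n w \<and> (\<exists>i w'. braid_eq n w w' \<and> i_positive i w')"

definition dh_less :: "nat \<Rightarrow> word \<Rightarrow> word \<Rightarrow> bool" where
  "dh_less n u v \<longleftrightarrow> dehornoy_pos n (inv_word u @ v)"

definition dh_le :: "nat \<Rightarrow> word \<Rightarrow> word \<Rightarrow> bool" where
  "dh_le n u v \<longleftrightarrow> braid_eq n u v \<or> dh_less n u v"

text \<open>A subgroup H (given as a set of words closed under braid_eq) is densely ordered
  if it has no least positive element.\<close>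
definition densely_ordered :: "nat \<Rightarrow> word set \<Rightarrow> bool" where
  "densely_ordered n H \<longleftrightarrow>
     \<not> (\<exists>p\<in>H. dh_less n [] p \<and> (\<forall>q\<in>H. dh_less n [] q \<longrightarrow> dh_le n p q))"

definition h_word :: "word \<Rightarrow> word" where
  "h_word w = map (\<lambda>(i, b). (if i = 3 then 1 else i, b)) w"

definition ker_h :: "word set" where
  "ker_h = {w. gens 4 w \<and> braid_eq 3 (h_word w) []}"

end

theory Submission
  imports Defs
begin

text \<open>
  If p were the least positive element of ker h, its 3-positive representative would have
  the form a \<sigma>_3 w with a a word in \<sigma>_1, \<sigma>_2 (a 1- or 2-positive word is fixed by h, and
  by Property A it is nontrivial in B_3). The conjugate q = a \<sigma>_2\<inverse> \<sigma>_3 \<sigma>_1\<inverse> \<sigma>_2 a\<inverse> lies in ker h,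
  since h identifies \<sigma>_3 with \<sigma>_1; it is 3-positive, and by \<sigma>_3\<inverse> \<sigma>_2 \<sigma>_3 = \<sigma>_2 \<sigma>_3 \<sigma>_2\<inverse>
  the quotient q\<inverse> p equals the 3-positive word a \<sigma>_2\<inverse> \<sigma>_1 \<sigma>_2 \<sigma>_3 \<sigma>_2\<inverse> w. Hence
  1 < q < p.
  Comparing elements needs Dehornoy's Property A (an i-positive word never represents 1),
  proved by Larue's argument through Artin's action of braids on a free group.
\<close>

section \<open>Free groups\<close>

text \<open>Free group words are encoded like braid words: (k, True) is the generator x_k.\<close>

fun inv_letter :: "letter \<Rightarrow> letter" where
  "inv_letter (k, b) = (k, \<not> b)"

lemma inv_letter_inv_letter [simp]: "inv_letter (inv_letter x) = x"
  by (cases x) simp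

lemma inv_letter_eq_iff: "inv_letter x = y \<longleftrightarrow> x = inv_letter y"
  by (cases x; cases y) auto

lemma fst_inv_letter [simp]: "fst (inv_letter x) = fst x"
  by (cases x) simp

lemma inv_word_conv: "inv_word u = rev (map inv_letter u)"
proof -
  have "(\<lambda>(k, b). (k, \<not> b)) = inv_letter" by auto
  then show ?thesis by (simp add: inv_word_def)
qed

lemma inv_word_simps [simp]:
  "inv_word [] = []"
  "inv_word (x # u) = inv_word u @ [inv_letter x]"
  "inv_word (u @ v) = inv_word v @ inv_word u"
  "inv_word (inv_word u) = u"
  by (simp_all add: inv_word_conv rev_map comp_def)

lemma fst_set_inv_word [simp]: "fst ` set (inv_word u) = fst ` set u"
  by (simp add: inv_word_conv image_image)

definition reduce_step :: "word \<Rightarrow> letter \<Rightarrow> word" where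
  "reduce_step X x = (if X \<noteq> [] \<and> last X = inv_letter x then butlast X else X @ [x])"

definition reduce :: "word \<Rightarrow> word" where
  "reduce w = foldl reduce_step [] w"

fun reduced :: "word \<Rightarrow> bool" where
  "reduced [] = True"
| "reduced [x] = True"
| "reduced (x # y # r) \<longleftrightarrow> y \<noteq> inv_letter x \<and> reduced (y # r)"

lemma reduced_Cons: "reduced (x # Z) \<longleftrightarrow> reduced Z \<and> (Z \<noteq> [] \<longrightarrow> hd Z \<noteq> inv_letter x)"
  by (cases Z) auto

lemma reduced_snoc: "reduced (X @ [x]) \<longleftrightarrow> reduced X \<and> (X \<noteq> [] \<longrightarrow> x \<noteq> inv_letter (last X))"
  by (induction X rule: reduced.induct) auto

lemma reduced_append:
  "reduced (X @ Y) \<longleftrightarrow> reduced X \<and> reduced Y \<and> (X \<noteq> [] \<longrightarrow> Y \<noteq> [] \<longrightarrow> hd Y \<noteq> inv_letter (last X))"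
proof (induction Y rule: rev_induct)
  case (snoc y Y)
  then show ?case
    by (cases "Y = []") (auto simp: reduced_snoc simp flip: append_assoc)
qed simp

lemma reduced_butlast: "reduced X \<Longrightarrow> reduced (butlast X)"
  by (cases X rule: rev_cases) (auto simp: reduced_snoc)

lemma reduced_reduce_step: "reduced X \<Longrightarrow> reduced (reduce_step X x)"
  by (auto simp: reduce_step_def reduced_snoc inv_letter_eq_iff intro: reduced_butlast)

lemma reduced_reduce [simp]: "reduced (reduce w)"
proof -
  have "reduced X \<Longrightarrow> reduced (foldl reduce_step X w)" for X
    by (induction w arbitrary: X) (auto simp: reduced_reduce_step)
  then show ?thesis by (simp add: reduce_def)
qed

lemma reduce_Nil [simp]: "reduce [] = []"
  by (simp add: reduce_def)

lemma reduce_snoc: "reduce (w @ [x]) = reduce_step (reduce w) x"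
  by (simp add: reduce_def)

lemma reduce_reduced: "reduced X \<Longrightarrow> reduce X = X"
proof (induction X rule: rev_induct)
  case (snoc x X)
  then show ?case
    by (auto simp: reduce_snoc reduce_step_def reduced_snoc inv_letter_eq_iff)
qed simp

lemma reduce_singleton [simp]: "reduce [x] = [x]"
  by (simp add: reduce_reduced)

lemma reduce_step_cancel: "reduced X \<Longrightarrow> reduce_step (reduce_step X x) (inv_letter x) = X"
proof (cases "X \<noteq> [] \<and> last X = inv_letter x")
  case True
  then obtain Y where Y: "X = Y @ [inv_letter x]" by (metis append_butlast_last_id)
  moreover assume "reduced X"
  ultimately have "Y \<noteq> [] \<longrightarrow> last Y \<noteq> x" by (auto simp: reduced_snoc inv_letter_eq_iff)
  with Y show ?thesis by (auto simp: reduce_step_def)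
qed (auto simp: reduce_step_def)

lemma reduce_cancel: "reduce (u @ x # inv_letter x # v) = reduce (u @ v)"
proof -
  have "reduce (u @ x # inv_letter x # v)
      = foldl reduce_step (reduce_step (reduce_step (reduce u) x) (inv_letter x)) v"
    by (simp add: reduce_def)
  also have "\<dots> = foldl reduce_step (reduce u) v" by (simp add: reduce_step_cancel)
  finally show ?thesis by (simp add: reduce_def)
qed

lemma reduce_snoc_cancel:
  assumes "reduce v = B @ [inv_letter y]"
  shows "reduce (v @ [y]) = B"
  using assms by (simp add: reduce_snoc reduce_step_def)

lemma reduce_snoc_no_cancel:
  assumes "\<not> (reduce v \<noteq> [] \<and> last (reduce v) = inv_letter y)"
  shows "reduce (v @ [y]) = reduce v @ [y]"
  using assms by (auto simp: reduce_snoc reduce_step_def)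

lemma reduce_mid: "reduce (u @ reduce v @ w) = reduce (u @ v @ w)"
proof (induction v arbitrary: w rule: rev_induct)
  case (snoc y v)
  show ?case
  proof (cases "reduce v \<noteq> [] \<and> last (reduce v) = inv_letter y")
    case True
    then obtain B where B: "reduce v = B @ [inv_letter y]" by (metis append_butlast_last_id)
    have "reduce (u @ reduce (v @ [y]) @ w) = reduce ((u @ B) @ inv_letter y # y # w)"
      using reduce_cancel[of "u @ B" "inv_letter y"] by (simp add: reduce_snoc_cancel[OF B])
    also have "\<dots> = reduce (u @ v @ y # w)" using snoc.IH[of "y # w"] B by simp
    finally show ?thesis by simp
  next
    case False
    then show ?thesis using snoc.IH[of "y # w"] by (simp add: reduce_snoc_no_cancel)
  qed
qed simp

lemma reduce_left: "reduce (reduce u @ v) = reduce (u @ v)"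
  using reduce_mid[of "[]" u v] by simp

lemma reduce_right: "reduce (u @ reduce v) = reduce (u @ v)"
  using reduce_mid[of u v "[]"] by simp

lemma reduce_inv_word_cancel: "reduce (A @ F @ inv_word F @ B) = reduce (A @ B)"
proof (induction F arbitrary: A B)
  case (Cons y F)
  have "reduce (A @ (y # F) @ inv_word (y # F) @ B)
      = reduce ((A @ [y]) @ F @ inv_word F @ (inv_letter y # B))" by simp
  also have "\<dots> = reduce (A @ y # inv_letter y # B)" using Cons.IH[of "A @ [y]"] by simp
  finally show ?case by (simp add: reduce_cancel)
qed simp

lemma reduce_inv_word_cancel': "reduce (A @ inv_word F @ F @ B) = reduce (A @ B)"
  using reduce_inv_word_cancel[of A "inv_word F" B] by simp

lemma reduce_inv_word_cong:
  assumes "reduce F = reduce G"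
  shows "reduce (inv_word F) = reduce (inv_word G)"
proof -
  have "reduce (inv_word F) = reduce (inv_word F @ reduce G @ inv_word G)"
    using reduce_inv_word_cancel[of "inv_word F" G "[]"] by (simp add: reduce_mid)
  also have "\<dots> = reduce (inv_word G)"
    using reduce_inv_word_cancel'[of "[]" F "inv_word G"] by (simp add: reduce_mid flip: assms)
  finally show ?thesis .
qed

lemma set_reduce: "set (reduce w) \<subseteq> set w"
proof -
  have step: "set (reduce_step X x) \<subseteq> set X \<union> {x}" for X x
    by (auto simp: reduce_step_def dest: in_set_butlastD)
  have "set (foldl reduce_step X w) \<subseteq> set X \<union> set w" for X
  proof (induction w arbitrary: X)
    case (Cons x w)
    then show ?case using step[of X x] by force
  qed simp
  from this[of "[]"] show ?thesis by (simp add: reduce_def)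
qed

definition fsubst :: "(nat \<Rightarrow> word) \<Rightarrow> word \<Rightarrow> word" where
  "fsubst f w = concat (map (\<lambda>(k, b). if b then f k else inv_word (f k)) w)"

lemma fsubst_simps [simp]:
  "fsubst f [] = []"
  "fsubst f (x # w) = (if snd x then f (fst x) else inv_word (f (fst x))) @ fsubst f w"
  "fsubst f (u @ v) = fsubst f u @ fsubst f v"
  by (auto simp: fsubst_def split: prod.split)

lemma fsubst_inv_word: "fsubst f (inv_word u) = inv_word (fsubst f u)"
  by (induction u) auto

lemma fsubst_fsubst: "fsubst g (fsubst f w) = fsubst (\<lambda>k. fsubst g (f k)) w"
  by (induction w) (auto simp: fsubst_inv_word)

lemma fsubst_gen [simp]: "fsubst (\<lambda>k. [(k, True)]) w = w"
  by (induction w) auto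

lemma reduce_fsubst_reduce: "reduce (fsubst f (reduce w)) = reduce (fsubst f w)"
proof (induction w rule: rev_induct)
  case (snoc y w)
  have "reduce (fsubst f (w @ [y])) = reduce (reduce (fsubst f w) @ fsubst f [y])"
    by (simp add: reduce_left)
  also have "\<dots> = reduce (fsubst f (reduce w) @ fsubst f [y])"
    by (metis snoc.IH reduce_left)
  also have "\<dots> = reduce (fsubst f (reduce (w @ [y])))"
  proof (cases "reduce w \<noteq> [] \<and> last (reduce w) = inv_letter y")
    case True
    then obtain B where B: "reduce w = B @ [inv_letter y]" by (metis append_butlast_last_id)
    define F where "F = fsubst f [inv_letter y]"
    have "fsubst f [y] = inv_word F"
      using fsubst_inv_word[of f "[inv_letter y]"] by (simp only: F_def) simp
    then have "reduce (fsubst f (reduce w) @ fsubst f [y])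
        = reduce (fsubst f B @ F @ inv_word F @ [])"
      by (simp only: B fsubst_simps(3) append_assoc append_Nil2 flip: F_def)
    then show ?thesis
      using reduce_inv_word_cancel[of "fsubst f B" F "[]"]
      by (simp only: append_Nil2 reduce_snoc_cancel[OF B])
  qed (simp add: reduce_snoc_no_cancel)
  finally show ?case by (rule HOL.sym)
qed simp

lemma reduce_fsubst_cong:
  assumes "\<And>k. reduce (F k) = reduce (G k)"
  shows "reduce (fsubst F w) = reduce (fsubst G w)"
proof (induction w)
  case (Cons x w)
  have x: "reduce (fsubst F [x]) = reduce (fsubst G [x])"
    using assms reduce_inv_word_cong[OF assms] by (cases "snd x") simp_all
  have "reduce (fsubst F (x # w)) = reduce (reduce (fsubst F [x]) @ reduce (fsubst F w))"
    by (simp add: reduce_left reduce_right)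
  also have "\<dots> = reduce (reduce (fsubst G [x]) @ reduce (fsubst G w))"
    by (simp only: x Cons.IH)
  also have "\<dots> = reduce (fsubst G (x # w))"
    by (simp add: reduce_left reduce_right)
  finally show ?case .
qed simp

lemma fst_set_fsubst: "fst ` set (fsubst f Y) \<subseteq> (\<Union>y\<in>set Y. fst ` set (f (fst y)))"
proof (induction Y)
  case (Cons y Y)
  have "fst ` set (fsubst f (y # Y)) = fst ` set (f (fst y)) \<union> fst ` set (fsubst f Y)"
    by (cases "snd y") (simp_all add: image_Un)
  with Cons.IH show ?case by auto
qed simp

section \<open>Artin's action and Property A\<close>

text \<open>
  \<sigma>_j acts on the free group by x_j \<mapsto> x_(j+1), x_(j+1) \<mapsto> x_(j+1) x_j x_(j+1)\<inverse> (Artin);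
  artin_neg j is the inverse automorphism.
\<close>

definition artin_pos :: "nat \<Rightarrow> nat \<Rightarrow> word" where
  "artin_pos j k =
    (if k = j then [(Suc j, True)]
     else if k = Suc j then [(Suc j, True), (j, True), (Suc j, False)]
     else [(k, True)])"

definition artin_neg :: "nat \<Rightarrow> nat \<Rightarrow> word" where
  "artin_neg j k =
    (if k = j then [(j, False), (Suc j, True), (j, True)]
     else if k = Suc j then [(j, True)]
     else [(k, True)])"

definition artin_gen :: "letter \<Rightarrow> nat \<Rightarrow> word" where
  "artin_gen l = (if snd l then artin_pos (fst l) else artin_neg (fst l))"

fun artin_subst :: "word \<Rightarrow> nat \<Rightarrow> word" where
  "artin_subst [] = (\<lambda>k. [(k, True)])"
| "artin_subst (l # w) = (\<lambda>k. fsubst (artin_subst w) (artin_gen l k))"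

definition artin_act :: "word \<Rightarrow> word \<Rightarrow> word" where
  "artin_act w X = reduce (fsubst (artin_subst w) X)"

lemma artin_subst_append: "artin_subst (u @ v) = (\<lambda>k. fsubst (artin_subst v) (artin_subst u k))"
  by (induction u) (simp_all add: fsubst_fsubst)

lemma artin_act_Nil [simp]: "artin_act [] X = reduce X"
  by (simp add: artin_act_def)

lemma artin_act_append: "artin_act (u @ v) X = artin_act v (artin_act u X)"
  by (simp add: artin_act_def reduce_fsubst_reduce fsubst_fsubst artin_subst_append)

lemma artin_act_Cons: "artin_act (l # w) X = artin_act w (reduce (fsubst (artin_gen l) X))"
  using artin_act_append[of "[l]" w] by (simp add: artin_act_def)

lemma artin_gen_cancel: "reduce (fsubst (artin_gen (i, \<not> b)) (artin_gen (i, b) k)) = [(k, True)]"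
  by (cases b) (auto simp: artin_gen_def artin_pos_def artin_neg_def reduce_def reduce_step_def)

lemma artin_subst_comm:
  "i + 2 \<le> j \<or> j + 2 \<le> i \<Longrightarrow>
    reduce (artin_subst [(i, True), (j, True)] k) = reduce (artin_subst [(j, True), (i, True)] k)"
  by (auto simp: artin_gen_def artin_pos_def reduce_def reduce_step_def)

lemma artin_subst_braid:
  "reduce (artin_subst [(i, True), (Suc i, True), (i, True)] k)
    = reduce (artin_subst [(Suc i, True), (i, True), (Suc i, True)] k)"
  by (auto simp: artin_gen_def artin_pos_def reduce_def reduce_step_def)

lemma artin_act_cong:
  "(\<And>k. reduce (artin_subst v k) = reduce (artin_subst v' k)) \<Longrightarrow> artin_act v X = artin_act v' X"
  unfolding artin_act_def by (rule reduce_fsubst_cong)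

lemma artin_act_braid_rel: "braid_rel n v v' \<Longrightarrow> artin_act v X = artin_act v' X"
proof (induction rule: braid_rel.induct)
  case (cancel i b)
  then show ?case using artin_gen_cancel[of i b] by (intro artin_act_cong) simp
next
  case (comm i j)
  then show ?case using artin_subst_comm[of i j] by (intro artin_act_cong) auto
next
  case (braid i j)
  then show ?case
    using artin_subst_braid[of i] artin_subst_braid[of j] by (intro artin_act_cong) auto
qed

lemma artin_act_braid_eq: "braid_eq n u v \<Longrightarrow> artin_act u X = artin_act v X"
proof (induction arbitrary: X rule: braid_eq.induct)
  case (ctx v v' u x)
  then show ?case by (simp add: artin_act_append artin_act_braid_rel)
qed auto

lemma reduce_fsubst_artin_gen_inverse:
  "reduce (fsubst (artin_gen (j, \<not> b)) (fsubst (artin_gen (j, b)) Y)) = reduce Y"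
proof -
  have "artin_act [(j, b), (j, \<not> b)] Y = artin_act [] Y"
    by (rule artin_act_cong) (simp add: artin_gen_cancel)
  then show ?thesis by (simp add: artin_act_def fsubst_fsubst)
qed

lemma split_after_last_occurrence:
  "\<exists>P Y. X = P @ Y \<and> a \<notin> fst ` set Y \<and> (P = [] \<or> fst (last P) = a)"
proof (induction X rule: rev_induct)
  case (snoc x X)
  then obtain P Y where "X = P @ Y" "a \<notin> fst ` set Y" "P = [] \<or> fst (last P) = a" by blast
  then show ?case
    by (cases "fst x = a") (fastforce intro: exI[of _ "X @ [x]"], fastforce intro: exI[of _ P])
qed simp

definition tail_agrees :: "nat \<Rightarrow> word \<Rightarrow> word \<Rightarrow> bool" where
  "tail_agrees a X R \<longleftrightarrow>
    R \<noteq> [] \<and> (if fst (last X) = a then last R = last X else fst (last R) \<noteq> a)"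

text \<open>
  Larue's observation: an automorphism fixing x_a and sending the other generators to words
  without x_a does not change how a reduced word ends with respect to x_a.
\<close>

context
  fixes \<phi> \<psi> :: "nat \<Rightarrow> word" and a :: nat
  assumes fixes_a: "\<phi> a = [(a, True)]"
    and avoids_a: "\<And>k. k \<noteq> a \<Longrightarrow> a \<notin> fst ` set (\<phi> k)"
    and left_inverse: "\<And>Y. reduce (fsubst \<psi> (fsubst \<phi> Y)) = reduce Y"
begin

lemma reduce_fsubst_avoiding:
  assumes "reduced Y" "Y \<noteq> []" "a \<notin> fst ` set Y"
  shows "reduce (fsubst \<phi> Y) \<noteq> [] \<and> a \<notin> fst ` set (reduce (fsubst \<phi> Y))"
proof
  show "reduce (fsubst \<phi> Y) \<noteq> []"
  proof
    assume "reduce (fsubst \<phi> Y) = []"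
    then have "reduce (fsubst \<psi> (reduce (fsubst \<phi> Y))) = []" by simp
    then show False using assms(1,2) by (simp add: reduce_fsubst_reduce left_inverse reduce_reduced)
  qed
  have "a \<notin> fst ` set (\<phi> (fst y))" if "y \<in> set Y" for y
    using that assms(3) avoids_a by (metis image_eqI)
  then have "a \<notin> fst ` set (fsubst \<phi> Y)"
    using fst_set_fsubst[of \<phi> Y] by blast
  then show "a \<notin> fst ` set (reduce (fsubst \<phi> Y))"
    using set_reduce by blast
qed

lemma tail_agrees_snoc:
  assumes "reduced (X @ [x])" "fst x = a"
    and IH: "X \<noteq> [] \<Longrightarrow> tail_agrees a X (reduce (fsubst \<phi> X))"
  shows "tail_agrees a (X @ [x]) (reduce (fsubst \<phi> (X @ [x])))"
proof -
  have "fsubst \<phi> (X @ [x]) = fsubst \<phi> X @ [x]" using assms(2) fixes_a by (cases x) auto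
  then have eq: "reduce (fsubst \<phi> (X @ [x])) = reduce_step (reduce (fsubst \<phi> X)) x"
    by (simp only: reduce_snoc)
  have "last (reduce (fsubst \<phi> X)) \<noteq> inv_letter x" if "X \<noteq> []"
    using IH[OF that] assms(1,2) that
      by (auto simp: tail_agrees_def reduced_snoc inv_letter_eq_iff split: if_splits)
  then show ?thesis
    unfolding eq using assms(2) by (cases "X = []") (auto simp: reduce_step_def tail_agrees_def)
qed

lemma tail_agrees_append_avoiding:
  assumes "reduced Y" "Y \<noteq> []" "a \<notin> fst ` set Y"
    and P: "P = [] \<or> fst (last P) = a \<and> tail_agrees a P (reduce (fsubst \<phi> P))"
  shows "tail_agrees a (P @ Y) (reduce (fsubst \<phi> (P @ Y)))"
proof -
  define Z where "Z = reduce (fsubst \<phi> Y)"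
  have Z: "Z \<noteq> []" "a \<notin> fst ` set Z"
    using reduce_fsubst_avoiding[OF assms(1-3)] by (simp_all add: Z_def)
  have last_Y: "fst (last Y) \<noteq> a" and last_Z: "fst (last Z) \<noteq> a"
    using assms(2,3) Z by (meson image_eqI last_in_set)+
  define P' where "P' = reduce (fsubst \<phi> P)"
  have eq: "reduce (fsubst \<phi> (P @ Y)) = P' @ Z"
  proof (cases "P = []")
    case False
    with P have "last P' = last P" "fst (last P) = a" "P' \<noteq> []"
      by (auto simp: P'_def tail_agrees_def)
    then have "hd Z \<noteq> inv_letter (last P')" using Z by (metis fst_inv_letter hd_in_set image_eqI)
    then have "reduced (P' @ Z)" using Z by (simp add: reduced_append P'_def Z_def)
    moreover have "reduce (fsubst \<phi> (P @ Y)) = reduce (P' @ Z)"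
      by (simp only: P'_def Z_def fsubst_simps(3) reduce_left reduce_right)
    ultimately show ?thesis by (simp add: reduce_reduced)
  qed (simp add: P'_def Z_def)
  show ?thesis
    unfolding eq tail_agrees_def using Z last_Y last_Z assms(2) by simp
qed

lemma tail_agrees_reduce_fsubst:
  "reduced X \<Longrightarrow> X \<noteq> [] \<Longrightarrow> tail_agrees a X (reduce (fsubst \<phi> X))"
proof (induction "length X" arbitrary: X rule: less_induct)
  case less
  show ?case
  proof (cases "fst (last X) = a")
    case True
    obtain X' x where X: "X = X' @ [x]" using less.prems(2) by (metis append_butlast_last_id)
    have "tail_agrees a X' (reduce (fsubst \<phi> X'))" if "X' \<noteq> []"
      using less.hyps[of X'] less.prems(1) that by (simp add: X reduced_snoc)
    then show ?thesis
      using less.prems(1) True unfolding X by (intro tail_agrees_snoc) simp_all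
  next
    case False
    obtain P Y where PY: "X = P @ Y" "a \<notin> fst ` set Y" "P = [] \<or> fst (last P) = a"
      using split_after_last_occurrence[of X a] by blast
    have "Y \<noteq> []" using False less.prems(2) PY(1,3) by auto
    moreover have "reduced P" "reduced Y"
      using less.prems(1) PY(1) by (simp_all add: reduced_append)
    moreover have "P = [] \<or> fst (last P) = a \<and> tail_agrees a P (reduce (fsubst \<phi> P))"
      using less.hyps[of P] PY(1,3) \<open>Y \<noteq> []\<close> \<open>reduced P\<close> by auto
    ultimately show ?thesis
      unfolding PY(1) using PY(2) by (intro tail_agrees_append_avoiding)
  qed
qed

end

definition shift_letter :: "nat \<Rightarrow> letter \<Rightarrow> letter" where
  "shift_letter i y = (if fst y = i then (Suc i, snd y) else y)"

lemma fsubst_artin_pos_avoiding: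
  "Suc i \<notin> fst ` set Y \<Longrightarrow> fsubst (artin_pos i) Y = map (shift_letter i) Y"
proof (induction Y)
  case (Cons y Y)
  then show ?case by (cases y; cases "snd y") (auto simp: artin_pos_def shift_letter_def)
qed simp

lemma reduced_map_shift_letter:
  "reduced Y \<Longrightarrow> Suc i \<notin> fst ` set Y \<Longrightarrow> reduced (map (shift_letter i) Y)"
  by (induction Y rule: reduced.induct) (auto simp: shift_letter_def)

lemma shift_letter_avoids: "i \<notin> fst ` set (map (shift_letter i) Y)"
  by (auto simp: shift_letter_def)

lemma length_le_1_if_penultimate_notin:
  assumes "A @ Z = Q @ [y, z]" "y \<notin> set Z"
  shows "length Z \<le> 1"
proof (cases "rev Z")
  case (Cons v R)
  show ?thesis
  proof (cases R)
    case (Cons u R')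
    then have "Z = rev R' @ [u, v]"
      using \<open>rev Z = v # R\<close> by (metis append.assoc append_Cons append_Nil rev.simps(2)
          rev_rev_ident)
    with assms show ?thesis by auto
  qed (use \<open>rev Z = v # R\<close> length_rev[of Z] in simp)
qed simp

lemma reduce_fsubst_artin_pos_snoc:
  assumes "\<nexists>Q. reduce (fsubst (artin_pos i) X) = Q @ [(i, \<not> e), (Suc i, False)]"
  shows "\<exists>Q. reduce (fsubst (artin_pos i) (X @ [(Suc i, e)])) = Q @ [(i, e), (Suc i, False)]"
proof -
  define R where "R = reduce (fsubst (artin_pos i) X)"
  have "fsubst (artin_pos i) [(Suc i, e)] = [(Suc i, True), (i, e), (Suc i, False)]"
    by (cases e) (simp_all add: artin_pos_def)
  then have eq: "reduce (fsubst (artin_pos i) (X @ [(Suc i, e)]))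
      = reduce (R @ [(Suc i, True), (i, e), (Suc i, False)])"
    by (simp add: R_def reduce_left)
  show ?thesis
  proof (cases "R \<noteq> [] \<and> last R = (Suc i, False)")
    case True
    then obtain R' where R': "R = R' @ [(Suc i, False)]" by (metis append_butlast_last_id)
    have "reduced R'" using R' reduced_reduce[of "fsubst (artin_pos i) X"]
      by (simp add: R_def reduced_snoc)
    moreover have "R' \<noteq> [] \<longrightarrow> last R' \<noteq> (i, \<not> e)"
      using assms R' by (metis R_def append_butlast_last_id append_Cons append_Nil append_assoc)
    ultimately have "reduced (R' @ [(i, e), (Suc i, False)])"
      by (simp add: reduced_append) (metis inv_letter.simps inv_letter_inv_letter)
    moreover have "reduce (R @ [(Suc i, True), (i, e), (Suc i, False)])
        = reduce (R' @ [(i, e), (Suc i, False)])"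
      using reduce_cancel[of R' "(Suc i, False)"] by (simp add: R')
    ultimately show ?thesis using eq by (simp add: reduce_reduced)
  next
    case False
    then have "reduced (R @ [(Suc i, True), (i, e), (Suc i, False)])"
      by (auto simp: reduced_append R_def) (metis inv_letter.simps inv_letter_inv_letter)
    then show ?thesis
      using eq by (intro exI[of _ "R @ [(Suc i, True)]"]) (simp add: reduce_reduced)
  qed
qed

lemma reduce_append_not_pair_ending:
  assumes R: "reduced (Q1 @ [(i, g), (Suc i, False)])"
    and Z: "reduced Z" "Z \<noteq> []" "i \<notin> fst ` set Z"
  shows "reduce (Q1 @ [(i, g), (Suc i, False)] @ Z) \<noteq> Q @ [(i, e), (Suc i, False)]"
proof
  assume eq: "reduce (Q1 @ [(i, g), (Suc i, False)] @ Z) = Q @ [(i, e), (Suc i, False)]"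
  have "(i, e) \<notin> set Z" using Z(3) by force
  show False
  proof (cases "hd Z = (Suc i, True)")
    case True
    then obtain Z' where Z': "Z = (Suc i, True) # Z'" using Z(2) by (cases Z) auto
    have "reduced (Q1 @ [(i, g)])" using R by (simp add: reduced_append)
    moreover have "Z' \<noteq> [] \<longrightarrow> hd Z' \<noteq> (i, \<not> g)" using Z(3) Z' by (cases Z') auto
    ultimately have "reduced ((Q1 @ [(i, g)]) @ Z')"
      using Z(1) Z' by (simp add: reduced_append reduced_Cons)
    moreover have "reduce (Q1 @ [(i, g), (Suc i, False)] @ Z) = reduce ((Q1 @ [(i, g)]) @ Z')"
      using reduce_cancel[of "Q1 @ [(i, g)]" "(Suc i, False)" Z'] by (simp add: Z')
    ultimately have eq': "(Q1 @ [(i, g)]) @ Z' = Q @ [(i, e), (Suc i, False)]"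
      using eq by (simp add: reduce_reduced)
    moreover have "(i, e) \<notin> set Z'" using \<open>(i, e) \<notin> set Z\<close> Z' by simp
    ultimately have "length Z' \<le> 1" by (rule length_le_1_if_penultimate_notin)
    then consider "Z' = []" | z where "Z' = [z]" by (cases Z') auto
    then show False
    proof cases
      case 2
      then show False using eq' Z' Z(1) by auto
    qed (use eq' in simp)
  next
    case False
    then have "reduced (Q1 @ [(i, g), (Suc i, False)] @ Z)"
      using R Z(1,2) by (simp add: reduced_append reduced_Cons)
    then have eq': "(Q1 @ [(i, g), (Suc i, False)]) @ Z = Q @ [(i, e), (Suc i, False)]"
      using eq by (simp add: reduce_reduced)
    then have "length Z \<le> 1" using \<open>(i, e) \<notin> set Z\<close> by (rule length_le_1_if_penultimate_notin)
    with Z(2) obtain z where "Z = [z]" by (cases Z) auto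
    then show False using eq' by auto
  qed
qed

lemma reduce_fsubst_artin_pos_append_avoiding:
  assumes "reduced Y" "Y \<noteq> []" "Suc i \<notin> fst ` set Y"
    and P: "P = [] \<or> (\<exists>Q g. reduce (fsubst (artin_pos i) P) = Q @ [(i, g), (Suc i, False)])"
  shows "reduce (fsubst (artin_pos i) (P @ Y)) \<noteq> Q @ [(i, e), (Suc i, False)]"
proof -
  define Z where "Z = map (shift_letter i) Y"
  have Z: "reduced Z" "Z \<noteq> []" "i \<notin> fst ` set Z"
    using assms(1-3) reduced_map_shift_letter shift_letter_avoids by (simp_all add: Z_def)
  have eq: "reduce (fsubst (artin_pos i) (P @ Y)) = reduce (reduce (fsubst (artin_pos i) P) @ Z)"
    using assms(3) by (simp add: Z_def fsubst_artin_pos_avoiding reduce_left)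
  show ?thesis
  proof (cases "P = []")
    case True
    have "(i, e) \<notin> set Z" using Z(3) by force
    then show ?thesis using eq Z(1) True by (auto simp: reduce_reduced)
  next
    case False
    then obtain Q1 g where "reduce (fsubst (artin_pos i) P) = Q1 @ [(i, g), (Suc i, False)]"
      using P by blast
    then show ?thesis
      using eq reduce_append_not_pair_ending[OF _ Z] reduced_reduce[of "fsubst (artin_pos i) P"] by simp
  qed
qed

lemma reduce_fsubst_artin_pos_last:
  "reduced X \<Longrightarrow> X \<noteq> [] \<Longrightarrow> fst (last X) = Suc i \<Longrightarrow>
    \<exists>Q. reduce (fsubst (artin_pos i) X) = Q @ [(i, snd (last X)), (Suc i, False)]"
proof (induction "length X" arbitrary: X rule: less_induct)
  case less
  obtain X' e where X: "X = X' @ [(Suc i, e)]"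
    using less.prems(2,3) by (metis append_butlast_last_id prod.collapse)
  have "reduced X'" using less.prems(1) X by (simp add: reduced_snoc)
  obtain P Y where PY: "X' = P @ Y" "Suc i \<notin> fst ` set Y" "P = [] \<or> fst (last P) = Suc i"
    using split_after_last_occurrence[of X' "Suc i"] by blast
  have IH: "P = [] \<or>
      (\<exists>Q. reduce (fsubst (artin_pos i) P) = Q @ [(i, snd (last P)), (Suc i, False)])"
    using less.hyps[of P] PY X \<open>reduced X'\<close> by (auto simp: reduced_append)
  have "\<nexists>Q. reduce (fsubst (artin_pos i) X') = Q @ [(i, \<not> e), (Suc i, False)]"
  proof (cases "Y = []")
    case True
    show ?thesis
    proof (cases "P = []")
      case False
      then obtain s where s: "last P = (Suc i, s)" using PY(3) by (metis prod.collapse)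
      with less.prems(1) X False PY(1) True have "s = e" by (auto simp: reduced_snoc)
      with IH False s show ?thesis using PY(1) True by auto
    qed (use PY(1) True in simp)
  next
    case False
    have "reduced Y" using \<open>reduced X'\<close> PY(1) by (simp add: reduced_append)
    with False IH show ?thesis
      unfolding PY(1) using PY(2) reduce_fsubst_artin_pos_append_avoiding by blast
  qed
  then show ?case unfolding X last_snoc snd_conv by (rule reduce_fsubst_artin_pos_snoc)
qed

definition ends_with_inverse :: "nat \<Rightarrow> word \<Rightarrow> bool" where
  "ends_with_inverse k X \<longleftrightarrow> reduced X \<and> X \<noteq> [] \<and> last X = (k, False)"

lemma ends_with_inverse_artin_gen:
  assumes X: "ends_with_inverse (Suc i) X" and l: "fst l < i \<or> l = (i, True)"
  shows "ends_with_inverse (Suc i) (reduce (fsubst (artin_gen l) X))"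
proof (cases "l = (i, True)")
  case True
  then show ?thesis
    using X reduce_fsubst_artin_pos_last[of X i] by (auto simp: ends_with_inverse_def artin_gen_def)
next
  case False
  obtain j b where l_def: "l = (j, b)" by fastforce
  with False l have "j < i" by auto
  then have "tail_agrees (Suc i) X (reduce (fsubst (artin_gen (j, b)) X))"
    using X reduce_fsubst_artin_gen_inverse
    by (intro tail_agrees_reduce_fsubst[where \<psi> = "artin_gen (j, \<not> b)"])
       (auto simp: ends_with_inverse_def artin_gen_def artin_pos_def artin_neg_def)
  then show ?thesis using X by (simp add: l_def ends_with_inverse_def tail_agrees_def)
qed

lemma artin_act_ends_with_inverse:
  "ends_with_inverse (Suc i) X \<Longrightarrow> \<forall>l\<in>set r. fst l < i \<or> l = (i, True) \<Longrightarrow>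
    ends_with_inverse (Suc i) (artin_act r X)"
proof (induction r arbitrary: X)
  case Nil
  then show ?case by (simp add: ends_with_inverse_def reduce_reduced)
next
  case (Cons l r)
  then show ?case by (simp add: artin_act_Cons ends_with_inverse_artin_gen)
qed

lemma artin_act_below_fixes:
  "\<forall>l\<in>set u. fst l < i \<Longrightarrow> artin_act u [(Suc i, True)] = [(Suc i, True)]"
proof (induction u)
  case (Cons l u)
  then have "artin_gen l (Suc i) = [(Suc i, True)]"
    by (auto simp: artin_gen_def artin_pos_def artin_neg_def)
  with Cons show ?case by (simp add: artin_act_Cons)
qed simp

lemma i_positive_decompose:
  assumes "i_positive i w"
  obtains u r where "w = u @ (i, True) # r" "\<forall>l\<in>set u. 1 \<le> fst l \<and> fst l < i"
    "\<forall>l\<in>set r. 1 \<le> fst l \<and> (fst l < i \<or> l = (i, True))"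
proof -
  have iT: "(i, True) \<in> set w" and iF: "(i, False) \<notin> set w"
    and bounds: "\<forall>l\<in>set w. 1 \<le> fst l \<and> fst l \<le> i"
    using assms by (auto simp: i_positive_def)
  obtain u r where w: "w = u @ (i, True) # r" and u: "(i, True) \<notin> set u"
    using split_list_first[OF iT] by blast
  have below: "fst l < i" if "fst l \<le> i" "l \<noteq> (i, True)" "l \<noteq> (i, False)" for l
    using that by (cases l) (metis (full_types) fst_conv le_neq_implies_less)
  have "1 \<le> fst l \<and> fst l < i" if "l \<in> set u" for l
    using that u iF bounds by (intro conjI below) (auto simp: w)
  moreover have "1 \<le> fst l \<and> (fst l < i \<or> l = (i, True))" if "l \<in> set r" for l
    using that iF bounds below[of l] by (auto simp: w)
  ultimately show ?thesis using that w by blast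
qed

text \<open>
  An i-positive braid sends x_(i+1) to a reduced word ending in x_(i+1)\<inverse>: the letters
  before the first \<sigma>_i fix x_(i+1), that \<sigma>_i produces x_(i+1) x_i x_(i+1)\<inverse>, and every
  later letter keeps such an ending.
\<close>

theorem i_positive_not_trivial:
  assumes "i_positive i w"
  shows "\<not> braid_eq n [] w"
proof
  assume "braid_eq n [] w"
  from artin_act_braid_eq[OF this, of "[(Suc i, True)]"]
  have trivial: "artin_act w [(Suc i, True)] = [(Suc i, True)]" by simp
  obtain u r where w: "w = (u @ [(i, True)]) @ r" "\<forall>l\<in>set u. 1 \<le> fst l \<and> fst l < i"
    "\<forall>l\<in>set r. 1 \<le> fst l \<and> (fst l < i \<or> l = (i, True))"
    using assms by (rule i_positive_decompose) simp
  have "artin_act u [(Suc i, True)] = [(Suc i, True)]"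
    using w(2) by (simp add: artin_act_below_fixes)
  then have "artin_act (u @ [(i, True)]) [(Suc i, True)]
      = [(Suc i, True), (i, True), (Suc i, False)]"
    by (simp add: artin_act_append)
      (simp add: artin_act_def artin_gen_def artin_pos_def reduce_reduced)
  then have "ends_with_inverse (Suc i) (artin_act (u @ [(i, True)]) [(Suc i, True)])"
    by (simp add: ends_with_inverse_def)
  then have "ends_with_inverse (Suc i) (artin_act w [(Suc i, True)])"
    unfolding w(1) artin_act_append using w(3) by (simp add: artin_act_ends_with_inverse)
  with trivial show False by (simp add: ends_with_inverse_def)
qed

section \<open>Braid words and the Dehornoy order\<close>

lemma gens_iff: "gens n u \<longleftrightarrow> (\<forall>l\<in>set u. 1 \<le> fst l \<and> fst l < n)"
  by (auto simp: gens_def)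

lemma gens_mono: "gens n u \<Longrightarrow> n \<le> m \<Longrightarrow> gens m u"
  by (auto simp: gens_def)

lemma gens_Nil [simp]: "gens n []"
  by (simp add: gens_def)

lemma gens_Cons [simp]: "gens n (x # v) \<longleftrightarrow> 1 \<le> fst x \<and> fst x < n \<and> gens n v"
  by (cases x) (auto simp: gens_def)

lemma gens_append [simp]: "gens n (u @ v) \<longleftrightarrow> gens n u \<and> gens n v"
  by (auto simp: gens_def)

lemma gens_inv_word [simp]: "gens n (inv_word u) \<longleftrightarrow> gens n u"
  by (induction u) auto

lemma braid_eq_gens: "braid_eq n u v \<Longrightarrow> gens n u \<and> gens n v"
proof (induction rule: braid_eq.induct)
  case (ctx v v' u x)
  then show ?case by (induction rule: braid_rel.induct) auto
qed auto

lemma braid_eq_append: "braid_eq n u u' \<Longrightarrow> braid_eq n v v' \<Longrightarrow> braid_eq n (u @ v) (u' @ v')"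
proof -
  have left: "braid_eq n (x @ u) (x @ u')" if "braid_eq n u u'" "gens n x" for x u u'
    using that
  proof (induction rule: braid_eq.induct)
    case (ctx v v' u y)
    then show ?case using braid_eq.ctx[of n v v' "x @ u" y] by simp
  qed (auto intro: braid_eq.intros)
  have right: "braid_eq n (u @ x) (u' @ x)" if "braid_eq n u u'" "gens n x" for x u u'
    using that
  proof (induction rule: braid_eq.induct)
    case (ctx v v' u y)
    then show ?case using braid_eq.ctx[of n v v' u "y @ x"] by simp
  qed (auto intro: braid_eq.intros)
  assume "braid_eq n u u'" "braid_eq n v v'"
  then show ?thesis by (meson left right braid_eq_gens braid_eq.trans)
qed

lemma braid_eq_cancel: "1 \<le> i \<Longrightarrow> i < n \<Longrightarrow> braid_eq n [(i, b), (i, \<not> b)] []"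
  using braid_eq.ctx[OF braid_rel.cancel[of i n b], of "[]" "[]"] by simp

lemma braid_eq_inv_word_right: "gens n u \<Longrightarrow> braid_eq n (u @ inv_word u) []"
proof (induction u)
  case (Cons x u)
  obtain i b where x: "x = (i, b)" by fastforce
  have "braid_eq n ([x] @ (u @ inv_word u) @ [(i, \<not> b)]) ([x] @ [] @ [(i, \<not> b)])"
    using Cons x by (intro braid_eq_append braid_eq.refl) auto
  moreover have "braid_eq n [(i, b), (i, \<not> b)] []" using Cons x by (intro braid_eq_cancel) auto
  ultimately show ?case using x by (auto intro: braid_eq.trans)
qed (simp add: braid_eq.refl)

lemma braid_eq_inv_word_left: "gens n u \<Longrightarrow> braid_eq n (inv_word u @ u) []"
  using braid_eq_inv_word_right[of n "inv_word u"] by simp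

lemma braid_eq_conj_by_succ:
  assumes "1 \<le> i" "Suc i < n"
  shows "braid_eq n [(Suc i, False), (i, True), (Suc i, True)]
    [(i, True), (Suc i, True), (i, False)]"
proof -
  have insert_cancel: "braid_eq n [(Suc i, False), (i, True), (Suc i, True)]
      [(Suc i, False), (i, True), (Suc i, True), (i, True), (i, False)]"
    using braid_eq_append[OF braid_eq.refl[where w = "[(Suc i, False), (i, True), (Suc i, True)]"]
        braid_eq_cancel[where i = i and b = True]] assms
    by (auto intro: braid_eq.sym)
  have braid: "braid_eq n [(Suc i, False), (i, True), (Suc i, True), (i, True), (i, False)]
      [(Suc i, False), (Suc i, True), (i, True), (Suc i, True), (i, False)]"
    using braid_eq.ctx[OF braid_rel.braid[of i n "Suc i"], of "[(Suc i, False)]" "[(i, False)]"]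
      assms
    by simp
  have delete_cancel:
    "braid_eq n [(Suc i, False), (Suc i, True), (i, True), (Suc i, True), (i, False)]
      [(i, True), (Suc i, True), (i, False)]"
    using braid_eq_append[OF braid_eq_cancel[where i = "Suc i" and b = False]
        braid_eq.refl[where w = "[(i, True), (Suc i, True), (i, False)]"]] assms
    by simp
  from insert_cancel braid delete_cancel show ?thesis by (blast intro: braid_eq.trans)
qed

lemma i_positive_append:
  "i_positive i u \<Longrightarrow> i_positive j v \<Longrightarrow> i_positive (max i j) (u @ v)"
  by (auto simp: i_positive_def max_def split: if_splits)

lemma i_positive_dehornoy_pos: "gens n w \<Longrightarrow> i_positive i w \<Longrightarrow> dehornoy_pos n w"
  by (auto simp: dehornoy_pos_def intro: braid_eq.refl)

lemma dehornoy_pos_append: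
  "dehornoy_pos n u \<Longrightarrow> dehornoy_pos n v \<Longrightarrow> dehornoy_pos n (u @ v)"
  unfolding dehornoy_pos_def by (auto intro: braid_eq_append i_positive_append)

lemma not_dehornoy_pos_trivial: "braid_eq n u [] \<Longrightarrow> \<not> dehornoy_pos n u"
  unfolding dehornoy_pos_def by (meson braid_eq.sym braid_eq.trans i_positive_not_trivial)

lemma dh_less_gens: "dh_less n u v \<Longrightarrow> gens n u \<and> gens n v"
  by (simp add: dh_less_def dehornoy_pos_def)

lemma dh_less_imp_not_le:
  assumes "dh_less n q p"
  shows "\<not> dh_le n p q"
proof -
  have gens: "gens n p" "gens n q" using dh_less_gens[OF assms] by simp_all
  show ?thesis
    unfolding dh_le_def
  proof (intro notI, elim disjE)
    assume "braid_eq n p q"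
    then have "braid_eq n (inv_word q @ p) (inv_word q @ q)"
      using gens by (intro braid_eq_append braid_eq.refl) simp_all
    then have "braid_eq n (inv_word q @ p) []"
      using gens braid_eq_inv_word_left by (blast intro: braid_eq.trans)
    with assms show False by (simp add: dh_less_def not_dehornoy_pos_trivial)
  next
    assume "dh_less n p q"
    from this assms have "dehornoy_pos n ((inv_word p @ q) @ (inv_word q @ p))"
      unfolding dh_less_def by (rule dehornoy_pos_append)
    moreover have "braid_eq n (inv_word p @ (q @ inv_word q) @ p) (inv_word p @ [] @ p)"
      using gens by (intro braid_eq_append braid_eq.refl braid_eq_inv_word_right) simp_all
    then have "braid_eq n ((inv_word p @ q) @ (inv_word q @ p)) []"
      using gens braid_eq_inv_word_left by (auto intro: braid_eq.trans)
    ultimately show False by (simp add: not_dehornoy_pos_trivial)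
  qed
qed

section \<open>The kernel of h\<close>

lemma h_word_simps [simp]:
  "h_word [] = []"
  "h_word (x # u) = (if fst x = 3 then 1 else fst x, snd x) # h_word u"
  "h_word (u @ v) = h_word u @ h_word v"
  by (auto simp: h_word_def split: prod.split)

lemma h_word_id: "\<forall>l\<in>set u. fst l \<noteq> 3 \<Longrightarrow> h_word u = u"
  by (induction u) auto

lemma gens_h_word: "gens 4 u \<Longrightarrow> gens 3 (h_word u)"
  by (induction u) auto

lemma braid_rel_h_word: "braid_rel 4 v v' \<Longrightarrow> braid_eq 3 (h_word v) (h_word v')"
proof (induction rule: braid_rel.induct)
  case (cancel i b)
  then show ?case using braid_eq_cancel[of "if i = 3 then 1 else i" 3 b] by auto
next
  case (comm i j)
  then have "h_word [(i, True), (j, True)] = h_word [(j, True), (i, True)]" by auto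
  moreover have "gens 3 (h_word [(i, True), (j, True)])" using comm by (intro gens_h_word) simp
  ultimately show ?case by (metis braid_eq.refl)
next
  case (braid i j)
  then have "braid_rel 3 (h_word [(i, True), (j, True), (i, True)])
      (h_word [(j, True), (i, True), (j, True)])"
    by (simp only: h_word_simps fst_conv snd_conv, intro braid_rel.braid) auto
  then show ?case using braid_eq.ctx[of 3 _ _ "[]" "[]"] by simp
qed

lemma braid_eq_h_word: "braid_eq 4 u v \<Longrightarrow> braid_eq 3 (h_word u) (h_word v)"
proof (induction rule: braid_eq.induct)
  case (refl w)
  then show ?case by (simp add: gens_h_word braid_eq.refl)
next
  case (ctx v v' u x)
  then show ?case
    by (simp add: braid_eq_append braid_rel_h_word gens_h_word braid_eq.refl)
qed (auto intro: braid_eq.intros)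

lemma positive_ker_h_element:
  assumes "p \<in> ker_h" "dehornoy_pos 4 p"
  obtains a w where "braid_eq 4 p (a @ (3, True) # w)" "gens 3 a" "i_positive 3 (a @ (3, True) # w)"
proof -
  obtain i w' where pw': "braid_eq 4 p w'" and pos: "i_positive i w'"
    using assms(2) by (auto simp: dehornoy_pos_def)
  have "i = 3"
  proof (rule ccontr)
    assume "i \<noteq> 3"
    have "gens 4 w'" "(i, True) \<in> set w'"
      using braid_eq_gens[OF pw'] pos by (auto simp: i_positive_def)
    then have "i < 3" using \<open>i \<noteq> 3\<close> by (auto simp: gens_iff)
    with pos have "h_word w' = w'" by (intro h_word_id) (auto simp: i_positive_def)
    moreover have "braid_eq 3 (h_word p) []" using assms(1) by (simp add: ker_h_def)
    ultimately have "braid_eq 3 [] w'"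
      using braid_eq_h_word[OF pw'] by (metis braid_eq.sym braid_eq.trans)
    with pos show False using i_positive_not_trivial by blast
  qed
  with pos obtain a r where "w' = a @ (3, True) # r" "\<forall>l\<in>set a. 1 \<le> fst l \<and> fst l < 3"
    by (auto elim: i_positive_decompose)
  with pw' pos \<open>i = 3\<close> show ?thesis using that by (auto simp: gens_iff)
qed

definition ker_h_witness :: "word \<Rightarrow> word" where
  "ker_h_witness a = a @ [(2, False), (3, True), (1, False), (2, True)] @ inv_word a"

lemma ker_h_witness_in_ker_h:
  assumes "gens 3 a"
  shows "ker_h_witness a \<in> ker_h"
proof -
  have "\<forall>l\<in>set a. fst l \<noteq> 3" using assms unfolding gens_iff by fastforce
  then have fixes_a: "h_word a = a" "h_word (inv_word a) = inv_word a"
    by (simp_all add: h_word_id inv_word_conv)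
  note braid_eq.trans [trans]
  have "h_word (ker_h_witness a)
      = a @ inv_word [(1, False), (2, True)] @ [(1, False), (2, True)] @ inv_word a"
    by (simp add: ker_h_witness_def fixes_a)
  also have "braid_eq 3 \<dots> (a @ [] @ inv_word a)"
    using braid_eq_append[OF braid_eq.refl[OF assms]
        braid_eq_append[OF braid_eq_inv_word_left[of 3 "[(1, False), (2, True)]"]
          braid_eq.refl[where w = "inv_word a"]]] assms
    by simp
  also have "braid_eq 3 (a @ [] @ inv_word a) []"
    using assms braid_eq_inv_word_right by simp
  finally show ?thesis using gens_mono[OF assms, of 4] by (simp add: ker_h_def ker_h_witness_def)
qed

lemma ker_h_witness_positive:
  assumes "gens 3 a"
  shows "dh_less 4 [] (ker_h_witness a)"
proof -
  have "i_positive 3 (ker_h_witness a)"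
    using assms by (auto simp: i_positive_def ker_h_witness_def inv_word_conv gens_iff)
  moreover have "gens 4 (ker_h_witness a)"
    using gens_mono[OF assms, of 4] by (simp add: ker_h_witness_def)
  ultimately show ?thesis
    unfolding dh_less_def inv_word_simps(1) append_Nil by (intro i_positive_dehornoy_pos)
qed

lemma ker_h_witness_less:
  assumes p: "braid_eq 4 p (a @ (3, True) # w)" and a: "gens 3 a"
    and pos: "i_positive 3 (a @ (3, True) # w)"
  shows "dh_less 4 (ker_h_witness a) p"
proof -
  note braid_eq.trans [trans]
  have gens: "gens 4 a" "gens 4 w" using braid_eq_gens[OF p] by simp_all
  have "braid_eq 4 (inv_word (ker_h_witness a) @ p)
      (inv_word (ker_h_witness a) @ a @ (3, True) # w)"
    using p gens by (intro braid_eq_append braid_eq.refl) (simp_all add: ker_h_witness_def)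
  also have "inv_word (ker_h_witness a) @ a @ (3, True) # w
      = (a @ [(2, False), (1, True), (3, False), (2, True)]) @ (inv_word a @ a) @ ((3, True) # w)"
    by (simp add: ker_h_witness_def)
  also have "braid_eq 4 \<dots>
      ((a @ [(2, False), (1, True), (3, False), (2, True)]) @ [] @ ((3, True) # w))"
    using gens by (intro braid_eq_append braid_eq.refl braid_eq_inv_word_left) simp_all
  also have "\<dots> = (a @ [(2, False), (1, True)]) @ [(3, False), (2, True), (3, True)] @ w"
    by simp
  also have "braid_eq 4 \<dots> ((a @ [(2, False), (1, True)]) @ [(2, True), (3, True), (2, False)] @ w)"
    using gens braid_eq_conj_by_succ[of 2 4] by (intro braid_eq_append braid_eq.refl) simp_all
  finally have "braid_eq 4 (inv_word (ker_h_witness a) @ p)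
      (a @ [(2, False), (1, True), (2, True), (3, True), (2, False)] @ w)"
    by simp
  moreover have "i_positive 3 (a @ [(2, False), (1, True), (2, True), (3, True), (2, False)] @ w)"
    using pos by (auto simp: i_positive_def)
  ultimately show ?thesis
    using p by (auto simp: dh_less_def dehornoy_pos_def dest: braid_eq_gens)
qed

theorem proposition3p7:
  shows "densely_ordered 4 ker_h"
  unfolding densely_ordered_def
proof
  assume "\<exists>p\<in>ker_h. dh_less 4 [] p \<and> (\<forall>q\<in>ker_h. dh_less 4 [] q \<longrightarrow> dh_le 4 p q)"
  then obtain p where p: "p \<in> ker_h" "dh_less 4 [] p"
    and least: "\<And>q. q \<in> ker_h \<Longrightarrow> dh_less 4 [] q \<Longrightarrow> dh_le 4 p q"
    by blast
  from p obtain a w where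
    "braid_eq 4 p (a @ (3, True) # w)" "gens 3 a" "i_positive 3 (a @ (3, True) # w)"
    by (auto simp: dh_less_def elim: positive_ker_h_element)
  then have "dh_less 4 (ker_h_witness a) p" and "dh_le 4 p (ker_h_witness a)"
    using least ker_h_witness_in_ker_h ker_h_witness_positive ker_h_witness_less by blast+
  then show False using dh_less_imp_not_le by blast
qed

end
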